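(* For the submodule $M=[(z-w)^2]$ of $H^2(\mathbb D^2)$, the sequence $\{\Sigma_k(M)\}_{k\ge0}$ is strictly decreasing, and as $k\to\infty$, \[ \Sigma_k(M)=\frac{92}{105k}+\frac{46}{105k^2}+O\!\left(\frac1{k^3}\right). \]
   Context: $H^2(\mathbb D^2)$ is the Hardy space on the bidisk (monomials $z^aw^b$ orthonormal); $[q]$ is the smallest closed subspace containing $q$ invariant under multiplication by $z$ and $w$. Let $p=(z-w)^2$. For $n\ge0$ let $A^n=(a_{i,j})_{i,j=0}^n$ with $a_{i,j}=\langle pw^{|i-j|},pz^{|i-j|}\rangle$ (the symmetric pentadiagonal Toeplitz matrix with diagonal $6$, first off-diagonals $-4$, second off-diagonals $1$); $D_0=1$, $D_n=\det A^{n-1}$ ($n\ge1$); $A^n_{i,j}$ is the $(i,j)$ cofactor of $A^n$. Define $\phi_0=\psi_0=p/\|p\|$ and for $n\ge1$ $\phi_n=\frac{\sum_{j=0}^n pA^n_{0,j}z^jw^{n-j}}{\sqrt{D_{n+1}D_n}}$, $\psi_n=\frac{\sum_{j=0}^n pA^n_{n,j}z^jw^{n-j}}{\sqrt{D_{n+1}D_n}}$, orthonormal bases of $M\ominus zM$ and $M\ominus wM$ for $M=[p]$. The numerical invariants are $\Sigma_k(M):=\sum_{n\ge0}|\langle w^k\phi_n,z^k\psi_n\rangle|^2$, $k\ge0$ (for $k=0,1$ these coincide with $\|[R_2^*,R_2][R_1^*,R_1]\|_{HS}^2$ and $\|[R_1^*,R_2]\|_{HS}^2$, $R_1,R_2$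 being multiplication by $z,w$ on $M$). *)

theory Defs
  imports "HOL-Analysis.Infinite_Sum" "HOL-Library.Landau_Symbols"
    "Jordan_Normal_Form.Determinant"
begin

text \<open>Elements of H^2(D^2) with real Taylor coefficients are represented by their
coefficient functions: f (a,b) is the coefficient of z^a w^b.  Monomials are
orthonormal, so the inner product is the sum of coefficient products.\<close>

type_synonym h2 = "nat \<times> nat \<Rightarrow> real"

definition h2_inner :: "h2 \<Rightarrow> h2 \<Rightarrow> real" where
  "h2_inner f g = (\<Sum>\<^sub>\<infinity>m. f m * g m)"

definition h2_norm :: "h2 \<Rightarrow> real" where
  "h2_norm f = sqrt (h2_inner f f)"

definition mon_mult :: "nat \<Rightarrow> nat \<Rightarrow> h2 \<Rightarrow> h2" where
  "mon_mult a b f = (\<lambda>(i,j). if a \<le> i \<and> b \<le> j then f (i - a, j - b) else 0)"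

text \<open>p = (z - w)^2 = z^2 - 2 z w + w^2.\<close>
definition pp :: h2 where
  "pp = (\<lambda>(i,j). if (i,j) = (2,0) then 1 else if (i,j) = (1,1) then -2
                 else if (i,j) = (0,2) then 1 else 0)"

definition absdiff :: "nat \<Rightarrow> nat \<Rightarrow> nat" where
  "absdiff i j = (if i \<le> j then j - i else i - j)"

definition Amat :: "nat \<Rightarrow> real mat" where
  "Amat n = mat (n+1) (n+1)
     (\<lambda>(i,j). h2_inner (mon_mult 0 (absdiff i j) pp) (mon_mult (absdiff i j) 0 pp))"

definition Dn :: "nat \<Rightarrow> real" where
  "Dn n = (if n = 0 then 1 else det (Amat (n - 1)))"

definition phi :: "nat \<Rightarrow> h2" where
  "phi n = (if n = 0 then (\<lambda>m. pp m / h2_norm pp)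
            else (\<lambda>m. (\<Sum>j\<le>n. cofactor (Amat n) 0 j * mon_mult j (n - j) pp m)
                       / sqrt (Dn (n+1) * Dn n)))"

definition psi :: "nat \<Rightarrow> h2" where
  "psi n = (if n = 0 then (\<lambda>m. pp m / h2_norm pp)
            else (\<lambda>m. (\<Sum>j\<le>n. cofactor (Amat n) n j * mon_mult j (n - j) pp m)
                       / sqrt (Dn (n+1) * Dn n)))"

definition Sigma :: "nat \<Rightarrow> real" where
  "Sigma k = (\<Sum>n. \<bar>h2_inner (mon_mult 0 k (phi n)) (mon_mult k 0 (psi n))\<bar>^2)"

end

(* The cofactor rows of the pentadiagonal Toeplitz matrix A^n are cubic polynomials in the
   column index, since such a cubic is annihilated by all rows of A^n but one.  Hence phi_n and
   psi_n are explicit, and <w^k phi_n, z^k psi_n> is a rational function of n with simple poles at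
   n = -1, ..., -4.  Squaring its partial fraction expansion and summing over n (the cross terms
   telescope) gives Sigma_k = C(k) zeta(2, k + 2) + H(k) with an explicit polynomial C and rational
   function H.  Two-sided Euler-Maclaurin bounds for the Hurwitz zeta value zeta(2, a) then yield
   both the monotonicity and the expansion 92/(105 k) + 46/(105 k^2) + O(1/k^3). *)

theory Submission
  imports Defs "HOL-Real_Asymp.Real_Asymp"
begin

section \<open>The Gram matrix of the shifted copies of p\<close>

definition pp_coeff :: "int \<Rightarrow> real" where
  "pp_coeff d = (if d = 0 then 1 else if d = 1 then -2 else if d = 2 then 1 else 0)"

text \<open>The numbers 6, -4, 1 are the autocorrelations of the coefficient sequence (1, -2, 1) of p.\<close>

definition gram_coeff :: "nat \<Rightarrow> real" where
  "gram_coeff d = (if d = 0 then 6 else if d = 1 then -4 else if d = 2 then 1 else 0)"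

lemma absdiff_commute: "absdiff i j = absdiff j i"
  by (simp add: absdiff_def)

lemma mon_mult_mon_mult: "mon_mult a b (mon_mult c d f) = mon_mult (a + c) (b + d) f"
  unfolding mon_mult_def by (auto simp: fun_eq_iff diff_diff_add)

lemma mon_mult_0_0 [simp]: "mon_mult 0 0 f = f"
  unfolding mon_mult_def by auto

lemma mon_mult_pp:
  "mon_mult i u pp (a,b) = (if a + b = i + u + 2 then pp_coeff (int a - int i) else 0)"
  unfolding mon_mult_def pp_def pp_coeff_def by auto

lemma h2_inner_homogeneous:
  assumes "\<And>a b. f (a,b) \<noteq> 0 \<Longrightarrow> a + b = s"
  shows "h2_inner f g = (\<Sum>a\<le>s. f (a, s-a) * g (a, s-a))"
proof -
  let ?S = "(\<lambda>a. (a, s-a)) ` {..s}"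
  have "f m * g m = 0" if "m \<notin> ?S" for m
    using assms that by (cases m) force
  then have "h2_inner f g = (\<Sum>m\<in>?S. f m * g m)"
    unfolding h2_inner_def by (subst infsum_cong_neutral[of ?S UNIV]) auto
  also have "\<dots> = (\<Sum>a\<le>s. f (a, s-a) * g (a, s-a))"
    by (subst sum.reindex) (auto simp: inj_on_def)
  finally show ?thesis .
qed

lemma h2_inner_mon_mult_pp:
  assumes "i \<le> t" "j \<le> t"
  shows "h2_inner (mon_mult i (t-i) pp) (mon_mult j (t-j) pp) = gram_coeff (absdiff i j)"
proof -
  have "h2_inner (mon_mult i (t-i) pp) (mon_mult j (t-j) pp) =
      (\<Sum>a\<le>t+2. pp_coeff (int a - int i) * pp_coeff (int a - int j))"
    by (subst h2_inner_homogeneous[where s="t+2"]) (auto simp: mon_mult_pp assms split: if_splits)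
  also have "\<dots> = (\<Sum>a\<in>{i,i+1,i+2}. pp_coeff (int a - int i) * pp_coeff (int a - int j))"
    by (rule sum.mono_neutral_right) (use assms in \<open>auto simp: pp_coeff_def\<close>)
  also have "\<dots> = gram_coeff (absdiff i j)"
    by (auto simp: pp_coeff_def gram_coeff_def absdiff_def)
  finally show ?thesis .
qed

lemma Amat_eq: "Amat n = mat (n+1) (n+1) (\<lambda>(i,j). gram_coeff (absdiff i j))"
  using h2_inner_mon_mult_pp[of 0 "absdiff i j" "absdiff i j" for i j]
  by (simp add: Amat_def absdiff_def)

lemma gram_coeff_absdiff:
  "gram_coeff (absdiff i j) =
        (if j = i then 6 else 0) - (if j = i + 1 then 4 else 0)
      - (if j = i - 1 then if 1 \<le> i then 4 else 0 else 0)
      + (if j = i + 2 then 1 else 0) + (if j = i - 2 then if 2 \<le> i then 1 else 0 else 0)"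
proof -
  consider "j = i" | "j = i + 1" | "j = i + 2" | "i + 3 \<le> j" | "j + 1 = i" | "j + 2 = i" | "j + 3 \<le> i"
    by linarith
  then show ?thesis
    by cases (auto simp: gram_coeff_def absdiff_def)
qed

lemma sum_gram_coeff:
  "(\<Sum>j\<le>N. gram_coeff (absdiff i j) * f j) =
      (if i \<le> N then 6 * f i else 0) - (if i + 1 \<le> N then 4 * f (i+1) else 0)
    - (if 1 \<le> i \<and> i - 1 \<le> N then 4 * f (i-1) else 0)
    + (if i + 2 \<le> N then f (i+2) else 0) + (if 2 \<le> i \<and> i - 2 \<le> N then f (i-2) else (0::real))"
proof -
  have "gram_coeff (absdiff i j) * f j =
        (if j = i then 6 * f i else 0) - (if j = i + 1 then 4 * f (i+1) else 0)
      - (if j = i - 1 then if 1 \<le> i then 4 * f (i-1) else 0 else 0)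
      + (if j = i + 2 then f (i+2) else 0) + (if j = i - 2 then if 2 \<le> i then f (i-2) else 0 else 0)" for j
    unfolding gram_coeff_absdiff by (simp add: left_diff_distrib distrib_right)
  then have "(\<Sum>j\<le>N. gram_coeff (absdiff i j) * f j) =
        (\<Sum>j\<le>N. if j = i then 6 * f i else 0) - (\<Sum>j\<le>N. if j = i + 1 then 4 * f (i+1) else 0)
      - (\<Sum>j\<le>N. if j = i - 1 then if 1 \<le> i then 4 * f (i-1) else 0 else 0)
      + (\<Sum>j\<le>N. if j = i + 2 then f (i+2) else 0) + (\<Sum>j\<le>N. if j = i - 2 then if 2 \<le> i then f (i-2) else 0 else 0)"
    by (simp only: sum.distrib sum_subtractf)
  then show ?thesis
    by simp
qed

section \<open>Cofactors and determinant of A^n\<close>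

text \<open>Up to the factor det A^n / ((n+3)(n+4)), this is the first row of cofactors of A^n: by
  sum_gram_coeff_cofrow it is orthogonal to the rows 1, ..., n of A^n.\<close>

definition cofrow :: "nat \<Rightarrow> nat \<Rightarrow> real" where
  "cofrow n j = (real j + 1) * (real n + 1 - real j) * (real n + 2 - real j)"

lemma sum_gram_coeff_cofrow:
  "(\<Sum>i\<le>n. gram_coeff (absdiff r i) * cofrow n i) =
      (if r = 0 then (real n + 3) * (real n + 4) else 0)
    + (if r = n + 1 then - 2 * (real n + 4) else 0) + (if r = n + 2 then 2 * (real n + 1) else 0)"
proof -
  \<comment> \<open>cofrow n vanishes at n + 1 and n + 2, so the band sums need no boundary cases for r \<le> n\<close>
  have extend: "(\<Sum>i\<le>n. gram_coeff (absdiff r i) * cofrow n i) = (\<Sum>i\<le>n+2. gram_coeff (absdiff r i) * cofrow n i)"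
    by (simp add: cofrow_def)
  consider "r = 0" | "r = 1" "1 \<le> n" | "2 \<le> r" "r \<le> n" | "r = n + 1" | "r = n + 2" | "n + 2 < r"
    by linarith
  then show ?thesis
  proof cases
    case 3
    then obtain q where "r = q + 2"
      using add.commute le_add_diff_inverse by metis
    with 3 show ?thesis
      unfolding extend unfolding sum_gram_coeff by (auto simp: cofrow_def algebra_simps)
  next
    case 6
    then have "\<not> r - 1 \<le> n" "\<not> r - 2 \<le> n"
      by arith+
    with 6 show ?thesis
      unfolding sum_gram_coeff by simp
  qed (unfold extend, unfold sum_gram_coeff, auto simp: cofrow_def algebra_simps)
qed

lemma cofactor_mult_eq_det_mult:
  fixes A :: "'a::comm_ring_1 mat"
  assumes A: "A \<in> carrier_mat n n" and x: "x \<in> carrier_vec n"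
    and Ax: "A *\<^sub>v x = c \<cdot>\<^sub>v unit_vec n q" and "q < n" "j < n"
  shows "cofactor A q j * c = det A * x $ j"
proof -
  have adj: "adj_mat A \<in> carrier_mat n n" "adj_mat A * A = det A \<cdot>\<^sub>m 1\<^sub>m n"
    using adj_mat[OF A] by auto
  have "adj_mat A *\<^sub>v (A *\<^sub>v x) = det A \<cdot>\<^sub>v x"
    using adj A x by (auto simp: assoc_mult_mat_vec[symmetric])
  then have "(adj_mat A *\<^sub>v (c \<cdot>\<^sub>v unit_vec n q)) $ j = det A * x $ j"
    using assms by (simp add: Ax)
  then show ?thesis
    using adj assms by (simp add: adj_mat_def mult.commute)
qed

lemma Amat_carrier: "Amat n \<in> carrier_mat (n+1) (n+1)"
  by (simp add: Amat_eq)

lemma Amat_mult_vec: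
  assumes "i \<le> n"
  shows "(Amat n *\<^sub>v vec (n+1) x) $ i = (\<Sum>j\<le>n. gram_coeff (absdiff i j) * x j)"
proof -
  have "{0..<n+1} = {..n}"
    by auto
  then show ?thesis
    using assms by (simp add: Amat_eq scalar_prod_def)
qed

lemma Amat_mult_cofrow:
  "Amat n *\<^sub>v vec (n+1) (cofrow n) = ((real n + 3) * (real n + 4)) \<cdot>\<^sub>v unit_vec (n+1) 0"
proof (rule eq_vecI)
  fix i
  assume "i < dim_vec (((real n + 3) * (real n + 4)) \<cdot>\<^sub>v unit_vec (n+1) 0)"
  then have i: "i \<le> n"
    by simp
  show "(Amat n *\<^sub>v vec (n+1) (cofrow n)) $ i = (((real n + 3) * (real n + 4)) \<cdot>\<^sub>v unit_vec (n+1) 0) $ i"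
    unfolding Amat_mult_vec[OF i] sum_gram_coeff_cofrow using i by simp
qed (simp add: Amat_eq)

lemma Amat_mult_cofrow_rev:
  "Amat n *\<^sub>v vec (n+1) (\<lambda>j. cofrow n (n - j)) = ((real n + 3) * (real n + 4)) \<cdot>\<^sub>v unit_vec (n+1) n"
proof (rule eq_vecI)
  fix i
  assume "i < dim_vec (((real n + 3) * (real n + 4)) \<cdot>\<^sub>v unit_vec (n+1) n)"
  then have i: "i \<le> n"
    by simp
  have "(\<Sum>j\<le>n. gram_coeff (absdiff i j) * cofrow n (n - j)) =
      (\<Sum>j\<le>n. gram_coeff (absdiff (n - i) j) * cofrow n j)"
    by (rule sum.reindex_bij_witness[of _ "\<lambda>j. n - j" "\<lambda>j. n - j"])
      (use i in \<open>auto simp: absdiff_def\<close>)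
  then show "(Amat n *\<^sub>v vec (n+1) (\<lambda>j. cofrow n (n - j))) $ i =
      (((real n + 3) * (real n + 4)) \<cdot>\<^sub>v unit_vec (n+1) n) $ i"
    unfolding Amat_mult_vec[OF i] sum_gram_coeff_cofrow using i by auto
qed (simp add: Amat_eq)

lemma cofactor_Amat:
  assumes "Amat n *\<^sub>v vec (n+1) c = ((real n + 3) * (real n + 4)) \<cdot>\<^sub>v unit_vec (n+1) q"
    and "q \<le> n" "j \<le> n"
  shows "cofactor (Amat n) q j = det (Amat n) / ((real n + 3) * (real n + 4)) * c j"
proof -
  have "cofactor (Amat n) q j * ((real n + 3) * (real n + 4)) = det (Amat n) * vec (n+1) c $ j"
    by (rule cofactor_mult_eq_det_mult[OF Amat_carrier _ assms(1)]) (use assms in auto)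
  moreover have "real n + 3 \<noteq> 0" "real n + 4 \<noteq> 0"
    by linarith+
  ultimately show ?thesis
    using assms by (simp add: eq_divide_eq)
qed

lemma cofactor_Amat_first_row:
  "j \<le> n \<Longrightarrow> cofactor (Amat n) 0 j = det (Amat n) / ((real n + 3) * (real n + 4)) * cofrow n j"
  by (rule cofactor_Amat[OF Amat_mult_cofrow]) simp_all

lemma cofactor_Amat_last_row:
  "j \<le> n \<Longrightarrow> cofactor (Amat n) n j = det (Amat n) / ((real n + 3) * (real n + 4)) * cofrow n (n - j)"
  by (rule cofactor_Amat[OF Amat_mult_cofrow_rev]) simp_all

lemma mat_delete_Amat: "mat_delete (Amat (Suc n)) 0 0 = Amat n"
  by (rule eq_matI) (auto simp: mat_delete_def Amat_eq absdiff_def)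

lemma cofactor_Amat_0_0: "cofactor (Amat n) 0 0 = Dn n"
proof (cases n)
  case 0
  have "mat_delete (Amat 0) 0 0 \<in> carrier_mat 0 0"
    using mat_delete_carrier[OF Amat_carrier[of 0]] by simp
  with 0 show ?thesis
    by (simp add: cofactor_def Dn_def)
qed (simp add: cofactor_def Dn_def mat_delete_Amat)

lemma Dn_Suc: "Dn (Suc n) = det (Amat n)"
  by (simp add: Dn_def)

lemma Dn_recurrence: "Dn (Suc n) * ((real n + 1) * (real n + 2)) = Dn n * ((real n + 3) * (real n + 4))"
proof -
  have "real n + 3 \<noteq> 0" "real n + 4 \<noteq> 0"
    by linarith+
  moreover have "Dn n = Dn (Suc n) / ((real n + 3) * (real n + 4)) * ((real n + 1) * (real n + 2))"
    using cofactor_Amat_first_row[of 0 n] by (simp add: cofactor_Amat_0_0 Dn_Suc cofrow_def)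
  ultimately show ?thesis
    by (simp add: eq_divide_eq)
qed

lemma Dn_eq: "Dn n = (real n + 1) * (real n + 2)^2 * (real n + 3) / 12"
proof (induction n)
  case 0
  then show ?case
    by (simp add: Dn_def)
next
  case (Suc n)
  have "Dn (Suc n) * ((real n + 1) * (real n + 2)) =
      ((real n + 2) * (real n + 3)^2 * (real n + 4) / 12) * ((real n + 1) * (real n + 2))"
    unfolding Dn_recurrence Suc.IH by (simp add: power2_eq_square algebra_simps)
  moreover have "(real n + 1) * (real n + 2) \<noteq> 0"
    by simp
  ultimately have "Dn (Suc n) = (real n + 2) * (real n + 3)^2 * (real n + 4) / 12"
    by (metis mult_right_cancel)
  then show ?case
    by (simp add: algebra_simps)
qed

lemma det_Amat_div: "det (Amat n) / ((real n + 3) * (real n + 4)) = (real n + 2) * (real n + 3) / 12"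
proof -
  have "det (Amat n) = (real n + 2) * (real n + 3) / 12 * ((real n + 3) * (real n + 4))"
    using Dn_eq[of "Suc n"] by (simp add: Dn_Suc power2_eq_square algebra_simps)
  moreover have "real n + 3 \<noteq> 0" "real n + 4 \<noteq> 0"
    by linarith+
  ultimately show ?thesis
    by simp
qed

section \<open>The inner products of w^k \<phi>_n and z^k \<psi>_n\<close>

definition cofrow_gram :: "nat \<Rightarrow> real" where
  "cofrow_gram n = (real n + 1) * (real n + 2) * (real n + 3) * (real n + 4)"

lemma cofrow_gram_pos: "cofrow_gram n > 0"
  by (simp add: cofrow_gram_def)

lemma sqrt_cofrow_gram_0: "sqrt (cofrow_gram 0) = cofrow 0 0 * h2_norm pp"
proof -
  have "sqrt (cofrow_gram 0) = sqrt (2^2 * 6)"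
    by (simp add: cofrow_gram_def)
  also have "\<dots> = cofrow 0 0 * h2_norm pp"
    using h2_inner_mon_mult_pp[of 0 0 0]
    by (simp only: real_sqrt_mult real_sqrt_abs) (simp add: h2_norm_def cofrow_def gram_coeff_def absdiff_def)
  finally show ?thesis .
qed

lemma normalize_cofactor_sum:
  assumes "\<And>j. j \<le> n \<Longrightarrow> cofactor (Amat n) q j = (real n + 2) * (real n + 3) / 12 * c j"
  shows "(\<Sum>j\<le>n. cofactor (Amat n) q j * mon_mult j (n - j) pp m) / sqrt (Dn (n+1) * Dn n) =
    (\<Sum>j\<le>n. c j * mon_mult j (n - j) pp m) / sqrt (cofrow_gram n)"
proof -
  let ?K = "(real n + 2) * (real n + 3) / 12"
  have "Dn (n+1) * Dn n = ?K^2 * cofrow_gram n"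
    unfolding Dn_eq cofrow_gram_def by (simp add: power2_eq_square algebra_simps)
  then have denom: "sqrt (Dn (n+1) * Dn n) = ?K * sqrt (cofrow_gram n)"
    by (simp add: real_sqrt_mult)
  have numer: "(\<Sum>j\<le>n. cofactor (Amat n) q j * mon_mult j (n - j) pp m) =
      ?K * (\<Sum>j\<le>n. c j * mon_mult j (n - j) pp m)"
    by (simp add: assms sum_distrib_left mult.assoc)
  show ?thesis
    unfolding numer denom by (rule mult_divide_mult_cancel_left) simp
qed

lemma phi_eq: "phi n = (\<lambda>m. (\<Sum>j\<le>n. cofrow n j * mon_mult j (n - j) pp m) / sqrt (cofrow_gram n))"
proof (cases "n = 0")
  case True
  then show ?thesis
    by (simp add: phi_def sqrt_cofrow_gram_0 cofrow_def)
next
  case False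
  have cof: "cofactor (Amat n) 0 j = (real n + 2) * (real n + 3) / 12 * cofrow n j" if "j \<le> n" for j
    using that by (simp add: cofactor_Amat_first_row det_Amat_div)
  have "phi n = (\<lambda>m. (\<Sum>j\<le>n. cofactor (Amat n) 0 j * mon_mult j (n - j) pp m) / sqrt (Dn (n+1) * Dn n))"
    using False by (simp add: phi_def)
  then show ?thesis
    using normalize_cofactor_sum[OF cof] by simp
qed

lemma psi_eq: "psi n = (\<lambda>m. (\<Sum>j\<le>n. cofrow n (n - j) * mon_mult j (n - j) pp m) / sqrt (cofrow_gram n))"
proof (cases "n = 0")
  case True
  then show ?thesis
    by (simp add: psi_def sqrt_cofrow_gram_0 cofrow_def)
next
  case False
  have cof: "cofactor (Amat n) n j = (real n + 2) * (real n + 3) / 12 * cofrow n (n - j)" if "j \<le> n" for j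
    using that by (simp add: cofactor_Amat_last_row det_Amat_div)
  have "psi n = (\<lambda>m. (\<Sum>j\<le>n. cofactor (Amat n) n j * mon_mult j (n - j) pp m) / sqrt (Dn (n+1) * Dn n))"
    using False by (simp add: psi_def)
  then show ?thesis
    using normalize_cofactor_sum[OF cof] by simp
qed

lemma mon_mult_scaled_sum:
  "mon_mult a b (\<lambda>m. (\<Sum>i\<in>I. x i * f i m) / q) = (\<lambda>m. (\<Sum>i\<in>I. x i * mon_mult a b (f i) m) / q)"
  unfolding mon_mult_def by (auto simp: fun_eq_iff)

lemma h2_inner_scaled_sums:
  assumes f: "\<And>i a b. i \<in> I \<Longrightarrow> f i (a,b) \<noteq> 0 \<Longrightarrow> a + b = s" and "finite I" "finite J"
  shows "h2_inner (\<lambda>m. (\<Sum>i\<in>I. x i * f i m) / q) (\<lambda>m. (\<Sum>j\<in>J. y j * g j m) / q) =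
    (\<Sum>i\<in>I. \<Sum>j\<in>J. x i * y j * h2_inner (f i) (g j)) / q^2"
proof -
  have "a + b = s" if "(\<Sum>i\<in>I. x i * f i (a,b)) / q \<noteq> 0" for a b
  proof -
    from that have "(\<Sum>i\<in>I. x i * f i (a,b)) \<noteq> 0"
      by simp
    then obtain i where "i \<in> I" "x i * f i (a,b) \<noteq> 0"
      by (rule sum.not_neutral_contains_not_neutral)
    then show ?thesis
      using f by simp
  qed
  then have "h2_inner (\<lambda>m. (\<Sum>i\<in>I. x i * f i m) / q) (\<lambda>m. (\<Sum>j\<in>J. y j * g j m) / q) =
      (\<Sum>a\<le>s. (\<Sum>i\<in>I. x i * f i (a, s-a)) / q * ((\<Sum>j\<in>J. y j * g j (a, s-a)) / q))"
    by (rule h2_inner_homogeneous)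
  also have "\<dots> = (\<Sum>a\<le>s. (\<Sum>i\<in>I. x i * f i (a, s-a)) * (\<Sum>j\<in>J. y j * g j (a, s-a))) / q^2"
    by (simp add: power2_eq_square flip: sum_divide_distrib)
  also have "\<dots> = (\<Sum>i\<in>I. \<Sum>j\<in>J. x i * y j * (\<Sum>a\<le>s. f i (a, s-a) * g j (a, s-a))) / q^2"
  proof -
    have "(\<Sum>i\<in>I. x i * f i (a, s-a)) * (\<Sum>j\<in>J. y j * g j (a, s-a)) =
        (\<Sum>i\<in>I. \<Sum>j\<in>J. x i * y j * (f i (a, s-a) * g j (a, s-a)))" for a
      by (simp add: sum_product mult_ac)
    then show ?thesis
      by (simp add: sum_distrib_left sum.swap[of _ _ "{..s}"])
  qed
  also have "\<dots> = (\<Sum>i\<in>I. \<Sum>j\<in>J. x i * y j * h2_inner (f i) (g j)) / q^2"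
    using f by (simp add: h2_inner_homogeneous[where s=s])
  finally show ?thesis .
qed

definition shifted_inner :: "nat \<Rightarrow> nat \<Rightarrow> real" where
  "shifted_inner k n = h2_inner (mon_mult 0 k (phi n)) (mon_mult k 0 (psi n))"

lemma shifted_inner_double_sum:
  "shifted_inner k n =
    (\<Sum>i\<le>n. \<Sum>j\<le>n. cofrow n i * cofrow n (n - j) * gram_coeff (absdiff (j + k) i)) / cofrow_gram n"
proof -
  have "shifted_inner k n =
      h2_inner (\<lambda>m. (\<Sum>i\<le>n. cofrow n i * mon_mult i (k + (n - i)) pp m) / sqrt (cofrow_gram n))
               (\<lambda>m. (\<Sum>j\<le>n. cofrow n (n - j) * mon_mult (k + j) (n - j) pp m) / sqrt (cofrow_gram n))"
    by (simp add: shifted_inner_def phi_eq psi_eq mon_mult_scaled_sum mon_mult_mon_mult)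
  also have "\<dots> = (\<Sum>i\<le>n. \<Sum>j\<le>n. cofrow n i * cofrow n (n - j) *
      h2_inner (mon_mult i (k + (n - i)) pp) (mon_mult (k + j) (n - j) pp)) / (sqrt (cofrow_gram n))^2"
    by (rule h2_inner_scaled_sums[where s="n+k+2"]) (auto simp: mon_mult_pp split: if_splits)
  also have "\<dots> = (\<Sum>i\<le>n. \<Sum>j\<le>n. cofrow n i * cofrow n (n - j) * gram_coeff (absdiff (j + k) i)) / cofrow_gram n"
  proof -
    have "h2_inner (mon_mult i (k + (n - i)) pp) (mon_mult (k + j) (n - j) pp) = gram_coeff (absdiff (j + k) i)"
      if "i \<le> n" "j \<le> n" for i j
      using h2_inner_mon_mult_pp[of i "n + k" "k + j"] that by (simp add: absdiff_commute add.commute)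
    then show ?thesis
      using cofrow_gram_pos[of n] by simp
  qed
  finally show ?thesis .
qed

lemma sum_atMost_if_add_eq:
  fixes n k c :: nat
  shows "(\<Sum>j\<le>n. if j + k = c then f (n - j) else 0) = (if k \<le> c \<and> c \<le> n + k then f (n + k - c) else (0::real))"
proof -
  have "(\<Sum>j\<le>n. if j + k = c then f (n - j) else 0) =
      (\<Sum>j\<le>n. if j = c - k then if k \<le> c then f (n + k - c) else 0 else 0)"
    by (intro sum.cong) (simp_all, linarith)
  then show ?thesis
    by (simp, arith)
qed

lemma shifted_inner_eq:
  "shifted_inner k n =
    ((if k = 0 then cofrow n n * ((real n + 3) * (real n + 4)) else 0)
   + (if 1 \<le> k \<and> k \<le> n + 1 then - 2 * (real n + 4) * cofrow n (k - 1) else 0)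
   + (if 2 \<le> k \<and> k \<le> n + 2 then 2 * (real n + 1) * cofrow n (k - 2) else 0)) / cofrow_gram n"
proof -
  have "(\<Sum>i\<le>n. \<Sum>j\<le>n. cofrow n i * cofrow n (n - j) * gram_coeff (absdiff (j + k) i)) =
      (\<Sum>j\<le>n. cofrow n (n - j) * (\<Sum>i\<le>n. gram_coeff (absdiff (j + k) i) * cofrow n i))"
    by (subst sum.swap) (simp add: sum_distrib_left mult_ac)
  also have "\<dots> = (\<Sum>j\<le>n. if j + k = 0 then cofrow n (n - j) * ((real n + 3) * (real n + 4)) else 0)
      + (\<Sum>j\<le>n. if j + k = n + 1 then cofrow n (n - j) * (- 2 * (real n + 4)) else 0)
      + (\<Sum>j\<le>n. if j + k = n + 2 then cofrow n (n - j) * (2 * (real n + 1)) else 0)"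
    unfolding sum_gram_coeff_cofrow sum.distrib[symmetric] by (intro sum.cong) (simp_all add: algebra_simps)
  also have "\<dots> = (if k = 0 then cofrow n n * ((real n + 3) * (real n + 4)) else 0)
   + (if 1 \<le> k \<and> k \<le> n + 1 then - 2 * (real n + 4) * cofrow n (k - 1) else 0)
   + (if 2 \<le> k \<and> k \<le> n + 2 then 2 * (real n + 1) * cofrow n (k - 2) else 0)"
    unfolding sum_atMost_if_add_eq[where f="\<lambda>i. cofrow n i * _"] by (simp add: not_less_eq_eq le_Suc_eq)
  finally show ?thesis
    by (simp add: shifted_inner_double_sum)
qed

lemma shifted_inner_0: "shifted_inner 0 n = 2 / (real n + 2)"
proof -
  have "real n + 2 \<noteq> 0"
    by linarith
  then show ?thesis
    using cofrow_gram_pos[of n]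
    by (simp add: shifted_inner_eq cofrow_def cofrow_gram_def field_simps)
qed

lemma shifted_inner_1: "shifted_inner 1 n = - 2 / (real n + 3)"
proof -
  have "real n + 3 \<noteq> 0"
    by linarith
  then show ?thesis
    using cofrow_gram_pos[of n]
    by (simp add: shifted_inner_eq cofrow_def cofrow_gram_def field_simps)
qed

lemma shifted_inner_eq_0: "n + 2 < k \<Longrightarrow> shifted_inner k n = 0"
  by (simp add: shifted_inner_eq)

text \<open>For n + 2 \<ge> k \<ge> 2, shifted_inner k n is a rational function of n with simple poles at
  n = -1, ..., -4; these are its residues, as polynomials in k.\<close>

definition pf1 :: "real \<Rightarrow> real" where "pf1 y = - y * (y - 1) * (y - 2)"
definition pf2 :: "real \<Rightarrow> real" where "pf2 y = 3 * y^3 - 6 * y^2 + 5 * y - 2"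
definition pf3 :: "real \<Rightarrow> real" where "pf3 y = - 3 * y^3 + 3 * y^2 - 2 * y"
definition pf4 :: "real \<Rightarrow> real" where "pf4 y = y * (y - 1) * (y + 1)"

lemma add_four_fractions:
  fixes w z v u :: real
  assumes "w \<noteq> 0" "z \<noteq> 0" "v \<noteq> 0" "u \<noteq> 0"
  shows "a / w + b / z + c / v + d / u = (a * (z * v * u) + b * (w * v * u) + c * (w * z * u) + d * (w * z * v)) / (w * z * v * u)"
  using assms by (simp add: field_simps)

lemma partial_fractions_identity:
  fixes x y :: real
  assumes "y - 1 + x \<noteq> 0" "y + x \<noteq> 0" "y + 1 + x \<noteq> 0" "y + 2 + x \<noteq> 0"
  shows "(- 2 * (y + 2 + x) * (y * x * (x + 1)) + 2 * (y - 1 + x) * ((y - 1) * (x + 1) * (x + 2)))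
      / ((y - 1 + x) * (y + x) * (y + 1 + x) * (y + 2 + x)) =
    pf1 y / (y - 1 + x) + pf2 y / (y + x) + pf3 y / (y + 1 + x) + pf4 y / (y + 2 + x)"
proof -
  have numer: "- 2 * (y + 2 + x) * (y * x * (x + 1)) + 2 * (y - 1 + x) * ((y - 1) * (x + 1) * (x + 2)) =
      pf1 y * ((y + x) * (y + 1 + x) * (y + 2 + x)) + pf2 y * ((y - 1 + x) * (y + 1 + x) * (y + 2 + x))
    + pf3 y * ((y - 1 + x) * (y + x) * (y + 2 + x)) + pf4 y * ((y - 1 + x) * (y + x) * (y + 1 + x))"
    unfolding pf1_def pf2_def pf3_def pf4_def by (simp add: algebra_simps power2_eq_square power3_eq_cube)
  show ?thesis
    unfolding add_four_fractions[OF assms] numer ..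
qed

lemma shifted_inner_partial_fractions:
  assumes "2 \<le> k" "k \<le> n + 2"
  shows "shifted_inner k n =
    pf1 k / (real n + 1) + pf2 k / (real n + 2) + pf3 k / (real n + 3) + pf4 k / (real n + 4)"
proof -
  define m where "m = n + 2 - k"
  have n: "real n = real k - 2 + real m"
    using assms by (simp add: m_def)
  have c1: "cofrow n (k - 1) = real k * real m * (real m + 1)"
    using assms by (simp add: cofrow_def n algebra_simps)
  have c2: "cofrow n (k - 2) = (real k - 1) * (real m + 1) * (real m + 2)"
    using assms by (simp add: cofrow_def n algebra_simps)
  have "k \<le> n + 1 \<or> m = 0"
    using assms unfolding m_def by arith
  then have "shifted_inner k n =
      (- 2 * (real n + 4) * cofrow n (k - 1) + 2 * (real n + 1) * cofrow n (k - 2)) / cofrow_gram n"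
    using assms c1 by (auto simp: shifted_inner_eq)
  also have "\<dots> = (- 2 * (real k + 2 + m) * (real k * m * (real m + 1)) + 2 * (real k - 1 + m) * ((real k - 1) * (real m + 1) * (real m + 2)))
      / ((real k - 1 + m) * (real k + m) * (real k + 1 + m) * (real k + 2 + m))"
    unfolding c1 c2 cofrow_gram_def n by (simp add: algebra_simps)
  also have "\<dots> = pf1 k / (real k - 1 + m) + pf2 k / (real k + m) + pf3 k / (real k + 1 + m) + pf4 k / (real k + 2 + m)"
    by (rule partial_fractions_identity) (use assms in linarith)+
  finally show ?thesis
    by (simp add: n algebra_simps)
qed

section \<open>The Hurwitz zeta value \<zeta>(2, a)\<close>

definition hurwitz_zeta2 :: "real \<Rightarrow> real" where
  "hurwitz_zeta2 a = (\<Sum>m. 1 / (a + real m)^2)"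

text \<open>Two consecutive truncations of the Euler--Maclaurin expansion
  \<zeta>(2, y) \<sim> 1/y + 1/(2y^2) + \<Sum> B_2j / y^(2j+1); comparing their telescoping differences with
  1/y^2 shows that they bound \<zeta>(2, y) from above and below.\<close>

definition zeta2_upper :: "real \<Rightarrow> real" where
  "zeta2_upper y = 1 / y + 1 / (2 * y^2) + 1 / (6 * y^3) - 1 / (30 * y^5) + 1 / (42 * y^7)"

definition zeta2_lower :: "real \<Rightarrow> real" where
  "zeta2_lower y = zeta2_upper y - 1 / (30 * y^9)"

lemma zeta2_upper_eq:
  "y > 0 \<Longrightarrow> zeta2_upper y = (210*y^6 + 105*y^5 + 35*y^4 - 7*y^2 + 5) / (210*y^7)"
  unfolding zeta2_upper_def by (simp add: field_simps) (simp add: algebra_simps power_numeral_reduce)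

lemma zeta2_lower_eq:
  "y > 0 \<Longrightarrow> zeta2_lower y = (210*y^8 + 105*y^7 + 35*y^6 - 7*y^4 + 5*y^2 - 7) / (210*y^9)"
  unfolding zeta2_lower_def zeta2_upper_eq by (simp add: field_simps)

lemma zeta2_upper_step:
  assumes "y > 0"
  shows "1 / y^2 \<le> zeta2_upper y - zeta2_upper (y + 1)"
proof -
  have "(210*y^6 + 105*y^5 + 35*y^4 - 7*y^2 + 5) / (210*y^7)
      - (210*(y+1)^6 + 105*(y+1)^5 + 35*(y+1)^4 - 7*(y+1)^2 + 5) / (210*(y+1)^7) - 1 / y^2
    = (1/42 + y/6 + 7*y^2/15 + 3*y^3/5 + 3*y^4/10) / (y^7 * (y+1)^7)"
    using assms by (simp add: field_simps) Groebner_Basis.algebra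
  moreover have "(1/42 + y/6 + 7*y^2/15 + 3*y^3/5 + 3*y^4/10) / (y^7 * (y+1)^7) \<ge> 0"
    using assms by simp
  moreover have "y + 1 > 0"
    using assms by simp
  ultimately show ?thesis
    unfolding zeta2_upper_eq[OF assms] zeta2_upper_eq[OF \<open>y + 1 > 0\<close>] by linarith
qed

lemma zeta2_lower_step:
  assumes "y > 0"
  shows "zeta2_lower y - zeta2_lower (y + 1) \<le> 1 / y^2"
proof -
  have "1 / y^2 - ((210*y^8 + 105*y^7 + 35*y^6 - 7*y^4 + 5*y^2 - 7) / (210*y^9)
      - (210*(y+1)^8 + 105*(y+1)^7 + 35*(y+1)^6 - 7*(y+1)^4 + 5*(y+1)^2 - 7) / (210*(y+1)^9))
    = (1/30 + 3*y/10 + 247*y^2/210 + 181*y^3/70 + 709*y^4/210 + 5*y^5/2 + 5*y^6/6) / (y^9 * (y+1)^9)"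
    using assms by (simp add: field_simps) Groebner_Basis.algebra
  moreover have "(1/30 + 3*y/10 + 247*y^2/210 + 181*y^3/70 + 709*y^4/210 + 5*y^5/2 + 5*y^6/6) / (y^9 * (y+1)^9) \<ge> 0"
    using assms by simp
  moreover have "y + 1 > 0"
    using assms by simp
  ultimately show ?thesis
    unfolding zeta2_lower_eq[OF assms] zeta2_lower_eq[OF \<open>y + 1 > 0\<close>] by linarith
qed

lemma sums_telescope_shift:
  fixes F :: "real \<Rightarrow> real"
  assumes "(\<lambda>m. F (a + real m)) \<longlonglongrightarrow> 0"
  shows "(\<lambda>m. F (a + real m) - F (a + real m + 1)) sums F a"
  using telescope_sums'[OF assms] by (simp add: ac_simps)

lemma zeta2_upper_sums: "(\<lambda>m. zeta2_upper (a + real m) - zeta2_upper (a + real m + 1)) sums zeta2_upper a"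
  by (rule sums_telescope_shift) (unfold zeta2_upper_def, real_asymp)

lemma zeta2_lower_sums: "(\<lambda>m. zeta2_lower (a + real m) - zeta2_lower (a + real m + 1)) sums zeta2_lower a"
  by (rule sums_telescope_shift) (unfold zeta2_lower_def zeta2_upper_def, real_asymp)

lemma hurwitz_zeta2_sums:
  assumes "a > 0"
  shows "(\<lambda>m. 1 / (a + real m)^2) sums hurwitz_zeta2 a"
proof -
  have "summable (\<lambda>m. 1 / (a + real m)^2)"
  proof (rule summable_comparison_test')
    show "summable (\<lambda>m. zeta2_upper (a + real m) - zeta2_upper (a + real m + 1))"
      using zeta2_upper_sums by (rule sums_summable)
    show "norm (1 / (a + real m)^2) \<le> zeta2_upper (a + real m) - zeta2_upper (a + real m + 1)" for m
      using zeta2_upper_step[of "a + real m"] assms by simp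
  qed
  then show ?thesis
    unfolding hurwitz_zeta2_def by (rule summable_sums)
qed

lemma hurwitz_zeta2_le_upper: "a > 0 \<Longrightarrow> hurwitz_zeta2 a \<le> zeta2_upper a"
  using zeta2_upper_step by (intro sums_le[OF _ hurwitz_zeta2_sums zeta2_upper_sums]) simp_all

lemma zeta2_lower_le_hurwitz_zeta2: "a > 0 \<Longrightarrow> zeta2_lower a \<le> hurwitz_zeta2 a"
  using zeta2_lower_step by (intro sums_le[OF _ zeta2_lower_sums hurwitz_zeta2_sums]) simp_all

lemma hurwitz_zeta2_rec:
  assumes "a > 0"
  shows "hurwitz_zeta2 a = 1 / a^2 + hurwitz_zeta2 (a + 1)"
proof -
  have "(\<lambda>m. 1 / (a + real (Suc m))^2) sums (hurwitz_zeta2 a - 1 / a^2)"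
    using hurwitz_zeta2_sums[OF assms] by (subst sums_Suc_iff) simp
  then have "(\<lambda>m. 1 / ((a + 1) + real m)^2) sums (hurwitz_zeta2 a - 1 / a^2)"
    by (simp add: ac_simps)
  moreover have "(\<lambda>m. 1 / ((a + 1) + real m)^2) sums hurwitz_zeta2 (a + 1)"
    using assms by (intro hurwitz_zeta2_sums) simp
  ultimately show ?thesis
    using sums_unique2 by fastforce
qed

lemma sums_inverse_diff:
  assumes "a > 0"
  shows "(\<lambda>m. 1 / (a + real m) - 1 / (a + real d + real m)) sums (\<Sum>l<d. 1 / (a + real l))"
proof (induction d)
  case 0
  then show ?case
    by simp
next
  case (Suc d)
  have "(\<lambda>m. 1 / (a + real d + real m)) \<longlonglongrightarrow> 0"
    by real_asymp
  from sums_telescope_shift[of "\<lambda>x. 1 / x", OF this] have "(\<lambda>m. 1 / (a + real d + real m) - 1 / (a + real (Suc d) + real m)) sums (1 / (a + real d))"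
    by (simp add: ac_simps)
  from sums_add[OF Suc.IH this] show ?case
    by simp
qed

lemma square_partial_fractions:
  fixes x :: real
  assumes "x > 0"
  shows "(p / x + q / (x + 1) + r / (x + 2) + s / (x + 3))^2 =
      p^2 / x^2 + q^2 / (x + 1)^2 + r^2 / (x + 2)^2 + s^2 / (x + 3)^2
    + 2 * p * q * (1 / x - 1 / (x + 1)) + p * r * (1 / x - 1 / (x + 2)) + 2/3 * p * s * (1 / x - 1 / (x + 3))
    + 2 * q * r * (1 / (x + 1) - 1 / (x + 2)) + q * s * (1 / (x + 1) - 1 / (x + 3))
    + 2 * r * s * (1 / (x + 2) - 1 / (x + 3))"
proof -
  define b c d where "b = x + 1" and "c = x + 2" and "d = x + 3"
  have "x \<noteq> 0" "b \<noteq> 0" "c \<noteq> 0" "d \<noteq> 0"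
    using assms by (simp_all add: b_def c_def d_def)
  then have products:
    "1 / x * (1 / b) = 1 / x - 1 / b" "1 / x * (1 / c) = (1 / x - 1 / c) / 2"
    "1 / x * (1 / d) = (1 / x - 1 / d) / 3" "1 / b * (1 / c) = 1 / b - 1 / c"
    "1 / b * (1 / d) = (1 / b - 1 / d) / 2" "1 / c * (1 / d) = 1 / c - 1 / d"
    by (simp_all add: field_simps) (simp_all add: b_def c_def d_def)
  have "(p / x + q / b + r / c + s / d)^2 =
      p^2 * (1 / x)^2 + q^2 * (1 / b)^2 + r^2 * (1 / c)^2 + s^2 * (1 / d)^2
    + 2 * p * q * (1 / x * (1 / b)) + 2 * p * r * (1 / x * (1 / c)) + 2 * p * s * (1 / x * (1 / d))
    + 2 * q * r * (1 / b * (1 / c)) + 2 * q * s * (1 / b * (1 / d)) + 2 * r * s * (1 / c * (1 / d))"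
    by (simp add: power2_eq_square algebra_simps)
  then show ?thesis
    unfolding products by (simp add: power_one_over b_def c_def d_def)
qed

lemma sums_square_partial_fractions:
  assumes "a > 0"
  shows "(\<lambda>m. (p / (a + real m) + q / (a + real m + 1) + r / (a + real m + 2) + s / (a + real m + 3))^2) sums
    ((p^2 + q^2 + r^2 + s^2) * hurwitz_zeta2 (a + 3)
     + p^2 * (1 / a^2 + 1 / (a + 1)^2 + 1 / (a + 2)^2) + q^2 * (1 / (a + 1)^2 + 1 / (a + 2)^2) + r^2 / (a + 2)^2
     + 2 * p * q / a + p * r * (1 / a + 1 / (a + 1)) + 2/3 * p * s * (1 / a + 1 / (a + 1) + 1 / (a + 2))
     + 2 * q * r / (a + 1) + q * s * (1 / (a + 1) + 1 / (a + 2)) + 2 * r * s / (a + 2))"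
proof -
  have sums: "(\<lambda>m. p^2 * (1 / (a + real m)^2) + q^2 * (1 / ((a + 1) + real m)^2)
      + r^2 * (1 / ((a + 2) + real m)^2) + s^2 * (1 / ((a + 3) + real m)^2)
      + 2 * p * q * (1 / (a + real m) - 1 / (a + real 1 + real m))
      + p * r * (1 / (a + real m) - 1 / (a + real 2 + real m))
      + 2/3 * p * s * (1 / (a + real m) - 1 / (a + real 3 + real m))
      + 2 * q * r * (1 / ((a + 1) + real m) - 1 / ((a + 1) + real 1 + real m))
      + q * s * (1 / ((a + 1) + real m) - 1 / ((a + 1) + real 2 + real m))
      + 2 * r * s * (1 / ((a + 2) + real m) - 1 / ((a + 2) + real 1 + real m))) sums
    (p^2 * hurwitz_zeta2 a + q^2 * hurwitz_zeta2 (a + 1) + r^2 * hurwitz_zeta2 (a + 2) + s^2 * hurwitz_zeta2 (a + 3)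
     + 2 * p * q * (\<Sum>l<1. 1 / (a + real l)) + p * r * (\<Sum>l<2. 1 / (a + real l))
     + 2/3 * p * s * (\<Sum>l<3. 1 / (a + real l)) + 2 * q * r * (\<Sum>l<1. 1 / ((a + 1) + real l))
     + q * s * (\<Sum>l<2. 1 / ((a + 1) + real l)) + 2 * r * s * (\<Sum>l<1. 1 / ((a + 2) + real l)))"
    using assms by (intro sums_add sums_mult hurwitz_zeta2_sums sums_inverse_diff) simp_all
  have summand: "(p / (a + real m) + q / (a + real m + 1) + r / (a + real m + 2) + s / (a + real m + 3))^2 =
      p^2 * (1 / (a + real m)^2) + q^2 * (1 / ((a + 1) + real m)^2)
      + r^2 * (1 / ((a + 2) + real m)^2) + s^2 * (1 / ((a + 3) + real m)^2)
      + 2 * p * q * (1 / (a + real m) - 1 / (a + real 1 + real m))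
      + p * r * (1 / (a + real m) - 1 / (a + real 2 + real m))
      + 2/3 * p * s * (1 / (a + real m) - 1 / (a + real 3 + real m))
      + 2 * q * r * (1 / ((a + 1) + real m) - 1 / ((a + 1) + real 1 + real m))
      + q * s * (1 / ((a + 1) + real m) - 1 / ((a + 1) + real 2 + real m))
      + 2 * r * s * (1 / ((a + 2) + real m) - 1 / ((a + 2) + real 1 + real m))" for m
    using square_partial_fractions[of "a + real m" p q r s] assms by (simp add: ac_simps)
  have zeta: "hurwitz_zeta2 a = 1 / a^2 + 1 / (a + 1)^2 + 1 / (a + 2)^2 + hurwitz_zeta2 (a + 3)"
    "hurwitz_zeta2 (a + 1) = 1 / (a + 1)^2 + 1 / (a + 2)^2 + hurwitz_zeta2 (a + 3)"
    "hurwitz_zeta2 (a + 2) = 1 / (a + 2)^2 + hurwitz_zeta2 (a + 3)"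
    using hurwitz_zeta2_rec[of a] hurwitz_zeta2_rec[of "a + 1"] hurwitz_zeta2_rec[of "a + 2"] assms
    by (simp_all add: ac_simps)
  show ?thesis
    unfolding summand using sums unfolding zeta by (simp add: algebra_simps numeral_2_eq_2 numeral_3_eq_3)
qed

section \<open>Closed form, monotonicity and asymptotics of \<Sigma>_k\<close>

definition sigma_zeta_coeff :: "real \<Rightarrow> real" where
  "sigma_zeta_coeff y = 20*y^6 - 60*y^5 + 98*y^4 - 96*y^3 + 58*y^2 - 20*y + 4"

definition sigma_rational_part :: "real \<Rightarrow> real" where
  "sigma_rational_part y =
    (12 - 36*y + 93*y^2 - 107*y^3 + 98*y^4 - 117*y^5 + 181*y^6 - 214*y^7 + 150*y^8 - 60*y^9)
    / (3 * y^2 * (y + 1)^2)"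

lemma sum_pf_squares: "pf1 y^2 + pf2 y^2 + pf3 y^2 + pf4 y^2 = sigma_zeta_coeff y"
  unfolding pf1_def pf2_def pf3_def pf4_def sigma_zeta_coeff_def by Groebner_Basis.algebra

lemma pf_rational_part:
  fixes y :: real
  assumes "y > 1"
  shows "pf1 y^2 * (1 / (y - 1)^2 + 1 / y^2 + 1 / (y + 1)^2) + pf2 y^2 * (1 / y^2 + 1 / (y + 1)^2) + pf3 y^2 / (y + 1)^2
     + 2 * pf1 y * pf2 y / (y - 1) + pf1 y * pf3 y * (1 / (y - 1) + 1 / y)
     + 2/3 * pf1 y * pf4 y * (1 / (y - 1) + 1 / y + 1 / (y + 1))
     + 2 * pf2 y * pf3 y / y + pf2 y * pf4 y * (1 / y + 1 / (y + 1)) + 2 * pf3 y * pf4 y / (y + 1)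
   = sigma_rational_part y"
proof -
  define w v where "w = y - 1" and "v = y + 1"
  have "w \<noteq> 0" "y \<noteq> 0" "v \<noteq> 0"
    using assms by (simp_all add: w_def v_def)
  then have "pf1 y^2 * (1 / w^2 + 1 / y^2 + 1 / v^2) + pf2 y^2 * (1 / y^2 + 1 / v^2) + pf3 y^2 / v^2
     + 2 * pf1 y * pf2 y / w + pf1 y * pf3 y * (1 / w + 1 / y)
     + 2/3 * pf1 y * pf4 y * (1 / w + 1 / y + 1 / v)
     + 2 * pf2 y * pf3 y / y + pf2 y * pf4 y * (1 / y + 1 / v) + 2 * pf3 y * pf4 y / v
   = (12 - 36*y + 93*y^2 - 107*y^3 + 98*y^4 - 117*y^5 + 181*y^6 - 214*y^7 + 150*y^8 - 60*y^9)
    / (3 * y^2 * v^2)"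
    unfolding pf1_def pf2_def pf3_def pf4_def
    by (simp add: field_simps) (use w_def v_def in Groebner_Basis.algebra)
  then show ?thesis
    by (simp add: w_def v_def sigma_rational_part_def)
qed

lemma Sigma_eq_suminf: "Sigma k = (\<Sum>n. (shifted_inner k n)^2)"
  by (simp add: Sigma_def shifted_inner_def)

lemma Sigma_0: "Sigma 0 = 4 * hurwitz_zeta2 2"
proof -
  have "(\<lambda>n. 4 * (1 / (2 + real n)^2)) sums (4 * hurwitz_zeta2 2)"
    by (intro sums_mult hurwitz_zeta2_sums) simp
  then show ?thesis
    by (simp add: Sigma_eq_suminf shifted_inner_0 sums_iff power_divide add.commute)
qed

lemma sums_shifted_inner_squares:
  assumes "2 \<le> k"
  shows "(\<lambda>n. (shifted_inner k n)^2) sums (sigma_zeta_coeff k * hurwitz_zeta2 (real k + 2) + sigma_rational_part k)"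
proof -
  let ?a = "real k - 1"
  have "(\<lambda>m. (shifted_inner k (m + (k - 2)))^2) sums
      (sigma_zeta_coeff k * hurwitz_zeta2 (?a + 3) + sigma_rational_part k)"
  proof -
    have "shifted_inner k (m + (k - 2)) =
        pf1 k / (?a + real m) + pf2 k / (?a + real m + 1) + pf3 k / (?a + real m + 2) + pf4 k / (?a + real m + 3)" for m
      using assms shifted_inner_partial_fractions[of k "m + (k - 2)"] by (simp add: algebra_simps)
    moreover have "(\<lambda>m. (pf1 k / (?a + real m) + pf2 k / (?a + real m + 1) + pf3 k / (?a + real m + 2)
        + pf4 k / (?a + real m + 3))^2) sums (sigma_zeta_coeff k * hurwitz_zeta2 (?a + 3) + sigma_rational_part k)"
    proof -
      have "?a > 0"
        using assms by simp
      note sums_square_partial_fractions[OF this, of "pf1 k" "pf2 k" "pf3 k" "pf4 k"]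
      moreover have "real k > 1"
        using assms by simp
      ultimately show ?thesis
        unfolding sum_pf_squares[symmetric] pf_rational_part[OF \<open>real k > 1\<close>, symmetric]
        by (simp add: algebra_simps)
    qed
    ultimately show ?thesis
      by simp
  qed
  moreover have "(\<lambda>m. (shifted_inner k (m + (k - 2)))^2) sums s \<longleftrightarrow> (\<lambda>n. (shifted_inner k n)^2) sums s" for s
    by (rule sums_zero_iff_shift) (simp add: shifted_inner_eq_0)
  ultimately show ?thesis
    by (simp add: add.commute)
qed

lemma Sigma_1: "Sigma 1 = 4 * hurwitz_zeta2 3"
proof -
  have "(\<lambda>n. 4 * (1 / (3 + real n)^2)) sums (4 * hurwitz_zeta2 3)"
    by (intro sums_mult hurwitz_zeta2_sums) simp
  then show ?thesis
    unfolding Sigma_eq_suminf shifted_inner_1 by (simp add: sums_iff power_divide add.commute)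
qed

lemma Sigma_closed_form:
  assumes "1 \<le> k"
  shows "Sigma k = sigma_zeta_coeff k * hurwitz_zeta2 (real k + 2) + sigma_rational_part k"
proof (cases "k = 1")
  case True
  then show ?thesis
    unfolding True Sigma_1 by (simp add: sigma_zeta_coeff_def sigma_rational_part_def)
next
  case False
  with assms have "2 \<le> k"
    by simp
  then show ?thesis
    using sums_shifted_inner_squares by (simp add: Sigma_eq_suminf sums_iff)
qed

lemma sigma_zeta_coeff_nonneg: "sigma_zeta_coeff y \<ge> 0"
  unfolding sum_pf_squares[symmetric] by simp

lemma sigma_zeta_coeff_diff: "sigma_zeta_coeff (y + 1) - sigma_zeta_coeff y = 40*y + 192*y^3 + 120*y^5"
  unfolding sigma_zeta_coeff_def by Groebner_Basis.algebra

text \<open>Since sigma_zeta_coeff is increasing, \<Sigma>_k - \<Sigma>_(k+1) is bounded below by the following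
  expression, in which \<zeta>(2, k + 2) has been replaced by its upper bound.\<close>

lemma Sigma_diff_bound_identity:
  fixes y :: real
  assumes "y > 0"
  shows "sigma_rational_part y - sigma_rational_part (y + 1) + sigma_zeta_coeff (y + 1) / (y + 2)^2
      - (sigma_zeta_coeff (y + 1) - sigma_zeta_coeff y) * zeta2_upper (y + 2)
    = (512 + 256*y + 1408*y^2 + (18548/7)*y^3 + (14808/7)*y^4 + (117608/105)*y^5 + (44624/105)*y^6
       + (3352/35)*y^7 + (1472/105)*y^8 + (92/105)*y^9) / (y^2 * (y + 1)^2 * (y + 2)^7)"
proof -
  have *: "(12 - 36*y + 93*y^2 - 107*y^3 + 98*y^4 - 117*y^5 + 181*y^6 - 214*y^7 + 150*y^8 - 60*y^9) / (3 * y^2 * v^2)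
      - (12 - 36*v + 93*v^2 - 107*v^3 + 98*v^4 - 117*v^5 + 181*v^6 - 214*v^7 + 150*v^8 - 60*v^9) / (3 * v^2 * u^2)
      + (20*v^6 - 60*v^5 + 98*v^4 - 96*v^3 + 58*v^2 - 20*v + 4) / u^2
      - ((20*v^6 - 60*v^5 + 98*v^4 - 96*v^3 + 58*v^2 - 20*v + 4) - (20*y^6 - 60*y^5 + 98*y^4 - 96*y^3 + 58*y^2 - 20*y + 4))
        * ((210*u^6 + 105*u^5 + 35*u^4 - 7*u^2 + 5) / (210*u^7))
    = (512 + 256*y + 1408*y^2 + (18548/7)*y^3 + (14808/7)*y^4 + (117608/105)*y^5 + (44624/105)*y^6
       + (3352/35)*y^7 + (1472/105)*y^8 + (92/105)*y^9) / (y^2 * v^2 * u^7)"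
    if "y \<noteq> 0" "v \<noteq> 0" "u \<noteq> 0" "v = y + 1" "u = y + 2" for v u
    using that(1-3) by (simp add: field_simps) (use that(4,5) in Groebner_Basis.algebra)
  have "y + 2 > 0"
    using assms by simp
  then show ?thesis
    using *[of "y + 1" "y + 2"] assms
    by (simp add: zeta2_upper_eq sigma_rational_part_def sigma_zeta_coeff_def add.assoc)
qed

lemma Sigma_Suc_less: "Sigma (Suc k) < Sigma k"
proof (cases "k = 0")
  case True
  have "hurwitz_zeta2 2 = 1/4 + hurwitz_zeta2 3"
    using hurwitz_zeta2_rec[of 2] by simp
  then have "Sigma 1 < Sigma 0"
    unfolding Sigma_0 Sigma_1 by simp
  with True show ?thesis
    by simp
next
  case False
  define y where "y = real k"
  define Z where "Z = hurwitz_zeta2 (y + 2)"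
  have y: "y \<ge> 1" and y_pos: "y > 0"
    using False by (simp_all add: y_def)
  have Sigma_k: "Sigma k = sigma_zeta_coeff y * Z + sigma_rational_part y"
    using False by (simp add: Sigma_closed_form y_def Z_def)
  have "Sigma (Suc k) = sigma_zeta_coeff (y + 1) * hurwitz_zeta2 (y + 3) + sigma_rational_part (y + 1)"
    using Sigma_closed_form[of "Suc k"] by (simp add: y_def add.assoc add.commute)
  also have "hurwitz_zeta2 (y + 3) = Z - 1 / (y + 2)^2"
    using hurwitz_zeta2_rec[of "y + 2"] y by (simp add: Z_def add.assoc)
  finally have Sigma_Suc_k: "Sigma (Suc k) = sigma_zeta_coeff (y + 1) * (Z - 1 / (y + 2)^2) + sigma_rational_part (y + 1)" .
  have "(sigma_zeta_coeff (y + 1) - sigma_zeta_coeff y) * Z \<le> (sigma_zeta_coeff (y + 1) - sigma_zeta_coeff y) * zeta2_upper (y + 2)"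
    using y by (intro mult_left_mono) (simp_all add: Z_def hurwitz_zeta2_le_upper sigma_zeta_coeff_diff)
  moreover have "sigma_rational_part y - sigma_rational_part (y + 1) + sigma_zeta_coeff (y + 1) / (y + 2)^2
      - (sigma_zeta_coeff (y + 1) - sigma_zeta_coeff y) * zeta2_upper (y + 2) > 0"
    using y unfolding Sigma_diff_bound_identity[OF y_pos]
    by (intro divide_pos_pos add_pos_nonneg) simp_all
  ultimately show ?thesis
    unfolding Sigma_k Sigma_Suc_k by (simp add: algebra_simps)
qed

lemma Sigma_bounds:
  assumes "1 \<le> k"
  shows "sigma_zeta_coeff k * zeta2_lower (real k + 2) + sigma_rational_part k \<le> Sigma k"
    and "Sigma k \<le> sigma_zeta_coeff k * zeta2_upper (real k + 2) + sigma_rational_part k"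
  using assms sigma_zeta_coeff_nonneg[of k]
  by (simp_all add: Sigma_closed_form mult_left_mono zeta2_lower_le_hurwitz_zeta2 hurwitz_zeta2_le_upper)

lemma bigo_sandwich:
  fixes f g l u h :: "'a \<Rightarrow> real"
  assumes "eventually (\<lambda>x. l x \<le> f x \<and> f x \<le> u x) F"
    and "(\<lambda>x. l x - g x) \<in> O[F](h)" and "(\<lambda>x. u x - g x) \<in> O[F](h)"
  shows "(\<lambda>x. f x - g x) \<in> O[F](h)"
proof -
  have "eventually (\<lambda>x. norm (f x - g x) \<le> norm (\<bar>l x - g x\<bar> + \<bar>u x - g x\<bar>)) F"
    using assms(1) by eventually_elim auto
  then have "(\<lambda>x. f x - g x) \<in> O[F](\<lambda>x. \<bar>l x - g x\<bar> + \<bar>u x - g x\<bar>)"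
    by (rule landau_o.big_mono)
  also have "(\<lambda>x. \<bar>l x - g x\<bar> + \<bar>u x - g x\<bar>) \<in> O[F](h)"
    using assms(2,3) by (intro sum_in_bigo) simp_all
  finally show ?thesis .
qed

lemma Sigma_upper_bound_asymptotics:
  "(\<lambda>k::nat. sigma_zeta_coeff k * zeta2_upper (real k + 2) + sigma_rational_part k
      - (92 / (105 * real k) + 46 / (105 * (real k)^2))) \<in> O(\<lambda>k. 1 / (real k)^3)"
  unfolding sigma_zeta_coeff_def zeta2_upper_def sigma_rational_part_def by real_asymp

lemma Sigma_lower_bound_asymptotics:
  "(\<lambda>k::nat. sigma_zeta_coeff k * zeta2_lower (real k + 2) + sigma_rational_part k
      - (92 / (105 * real k) + 46 / (105 * (real k)^2))) \<in> O(\<lambda>k. 1 / (real k)^3)"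
  unfolding sigma_zeta_coeff_def zeta2_lower_def zeta2_upper_def sigma_rational_part_def by real_asymp

theorem theorem3p5:
  shows "(\<forall>k. Sigma (Suc k) < Sigma k) \<and>
         (\<lambda>k::nat. Sigma k - (92 / (105 * real k) + 46 / (105 * (real k)^2)))
            \<in> O(\<lambda>k. 1 / (real k)^3)"
proof
  show "\<forall>k. Sigma (Suc k) < Sigma k"
    using Sigma_Suc_less by blast
  have "eventually (\<lambda>k. sigma_zeta_coeff k * zeta2_lower (real k + 2) + sigma_rational_part k \<le> Sigma k
      \<and> Sigma k \<le> sigma_zeta_coeff k * zeta2_upper (real k + 2) + sigma_rational_part k) at_top"
    using eventually_ge_at_top[of 1] by eventually_elim (simp add: Sigma_bounds)
  then show "(\<lambda>k::nat. Sigma k - (92 / (105 * real k) + 46 / (105 * (real k)^2))) \<in> O(\<lambda>k. 1 / (real k)^3)"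
    using Sigma_lower_bound_asymptotics Sigma_upper_bound_asymptotics by (rule bigo_sandwich)
qed

end
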